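(* Let $\mathfrak g$ be a finite-dimensional Lie algebra over a field $\mathbb K$ of characteristic zero and $\mathfrak h\subset\mathfrak g$ a commutative ideal. Let $\Psi:\mathfrak h^*\to\mathfrak g$ be a polynomial map with $\Psi(h)\in\mathrm{St}(h)$ for all $h\in\mathfrak h^*$, and set $f_\Psi(x)=\langle x,\Psi(\pi(x))\rangle$. Then $f_\Psi\in\operatorname{Ann}(\mathfrak h)$. Moreover, the polynomial maps with this property form a Lie algebra under $[\Psi_1,\Psi_2](h)=[\Psi_1(h),\Psi_2(h)]$, and $\Psi\mapsto f_\Psi$ is a Lie algebra homomorphism into $S(\mathfrak g)$: $\{f_{\Psi_1},f_{\Psi_2}\}=f_{[\Psi_1,\Psi_2]}$.
   Context: $\pi:\mathfrak g^*\to\mathfrak h^*$ is restriction. For $h\in\mathfrak h^*$, $\mathrm{St}(h)=\{\xi\in\mathfrak g\mid\langle h,[\xi,\eta]\rangle=0\ \forall\eta\in\mathfrak h\}$. $S(\mathfrak g)$ is the polynomial algebra on $\mathfrak g^*$ with Lie–Poisson bracket $\{f,g\}(x)=\langle x,[df(x),dg(x)]\rangle$, and $\operatorname{Ann}(\mathfrak h)=\{f\in S(\mathfrak g)\mid\{f,\eta\}=0\ \forall\eta\in\mathfrak h\}$. *)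

theory Defs
  imports "HOL-Computational_Algebra.Polynomial"
begin

text \<open>The Lie algebra g is modelled as K^I (functions 'i => 'k, 'i finite) with a
 bilinear bracket br; its dual g* is identified with K^I via the standard pairing.\<close>

definition pair :: "('i::finite \<Rightarrow> 'k::comm_ring_1) \<Rightarrow> ('i \<Rightarrow> 'k) \<Rightarrow> 'k" where
  "pair x \<xi> = (\<Sum>i\<in>UNIV. x i * \<xi> i)"

definition lie_algebra :: "(('i::finite \<Rightarrow> 'k::field) \<Rightarrow> ('i \<Rightarrow> 'k) \<Rightarrow> ('i \<Rightarrow> 'k)) \<Rightarrow> bool" where
  "lie_algebra br \<longleftrightarrow>
     (\<forall>a b x y z. br (\<lambda>i. a * x i + b * y i) z = (\<lambda>i. a * br x z i + b * br y z i)) \<and>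
     (\<forall>a b x y z. br z (\<lambda>i. a * x i + b * y i) = (\<lambda>i. a * br z x i + b * br z y i)) \<and>
     (\<forall>x. br x x = (\<lambda>_. 0)) \<and>
     (\<forall>x y z. (\<lambda>i. br x (br y z) i + br y (br z x) i + br z (br x y) i) = (\<lambda>_. 0))"

definition subspace_of :: "('i \<Rightarrow> 'k::field) set \<Rightarrow> bool" where
  "subspace_of H \<longleftrightarrow> (\<lambda>_. 0) \<in> H \<and>
     (\<forall>u\<in>H. \<forall>v\<in>H. (\<lambda>i. u i + v i) \<in> H) \<and> (\<forall>a. \<forall>u\<in>H. (\<lambda>i. a * u i) \<in> H)"

definition comm_ideal :: "(('i \<Rightarrow> 'k::field) \<Rightarrow> ('i \<Rightarrow> 'k) \<Rightarrow> ('i \<Rightarrow> 'k)) \<Rightarrow> ('i \<Rightarrow> 'k) set \<Rightarrow> bool" where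
  "comm_ideal br H \<longleftrightarrow> subspace_of H \<and> (\<forall>\<xi> \<eta>. \<eta> \<in> H \<longrightarrow> br \<xi> \<eta> \<in> H) \<and>
     (\<forall>\<eta>1\<in>H. \<forall>\<eta>2\<in>H. br \<eta>1 \<eta>2 = (\<lambda>_. 0))"

text \<open>h* : linear functionals on H (extensional: zero outside H).\<close>
definition hdual :: "('i \<Rightarrow> 'k::field) set \<Rightarrow> (('i \<Rightarrow> 'k) \<Rightarrow> 'k) set" where
  "hdual H = {\<phi>. (\<forall>u\<in>H. \<forall>v\<in>H. \<forall>a b. \<phi> (\<lambda>i. a * u i + b * v i) = a * \<phi> u + b * \<phi> v) \<and>
                 (\<forall>u. u \<notin> H \<longrightarrow> \<phi> u = 0)}"

definition restr :: "('i \<Rightarrow> 'k) set \<Rightarrow> ('i::finite \<Rightarrow> 'k::field) \<Rightarrow> (('i \<Rightarrow> 'k) \<Rightarrow> 'k)" where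
  "restr H x = (\<lambda>\<eta>. if \<eta> \<in> H then pair x \<eta> else 0)"

definition St :: "(('i \<Rightarrow> 'k::field) \<Rightarrow> ('i \<Rightarrow> 'k) \<Rightarrow> ('i \<Rightarrow> 'k)) \<Rightarrow> ('i \<Rightarrow> 'k) set
                   \<Rightarrow> (('i \<Rightarrow> 'k) \<Rightarrow> 'k) \<Rightarrow> ('i \<Rightarrow> 'k) set" where
  "St br H h = {\<xi>. \<forall>\<eta>\<in>H. h (br \<xi> \<eta>) = 0}"

text \<open>Polynomial functions: the algebra generated by constants and a set G of
 linear functions (basis-free definition of polynomial functions on a vector space).\<close>
inductive_set polyalg :: "('a \<Rightarrow> 'k::comm_ring_1) set \<Rightarrow> ('a \<Rightarrow> 'k) set" for G where
  const: "(\<lambda>_. c) \<in> polyalg G"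
| gen: "g \<in> G \<Longrightarrow> g \<in> polyalg G"
| add: "p \<in> polyalg G \<Longrightarrow> q \<in> polyalg G \<Longrightarrow> (\<lambda>x. p x + q x) \<in> polyalg G"
| mult: "p \<in> polyalg G \<Longrightarrow> q \<in> polyalg G \<Longrightarrow> (\<lambda>x. p x * q x) \<in> polyalg G"

definition poly_on :: "('a \<Rightarrow> 'k::comm_ring_1) set \<Rightarrow> 'a set \<Rightarrow> ('a \<Rightarrow> 'k) \<Rightarrow> bool" where
  "poly_on G D f \<longleftrightarrow> (\<exists>p\<in>polyalg G. \<forall>x\<in>D. f x = p x)"

text \<open>S(g): polynomial functions on g*.\<close>
definition Sg :: "(('i::finite \<Rightarrow> 'k::field) \<Rightarrow> 'k) set" where
  "Sg = {f. poly_on {(\<lambda>x. pair x \<xi>) | \<xi>. True} UNIV f}"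

text \<open>Polynomial maps h* -> g: every coordinate is a polynomial function on h*,
 whose linear functions are the evaluations at elements of H.\<close>
definition poly_map_hdual :: "('i::finite \<Rightarrow> 'k::field) set \<Rightarrow> ((('i \<Rightarrow> 'k) \<Rightarrow> 'k) \<Rightarrow> ('i \<Rightarrow> 'k)) \<Rightarrow> bool" where
  "poly_map_hdual H \<Psi> \<longleftrightarrow> (\<forall>i. poly_on {(\<lambda>\<phi>. \<phi> \<eta>) | \<eta>. \<eta> \<in> H} (hdual H) (\<lambda>\<phi>. \<Psi> \<phi> i))"

definition dderiv :: "(('i \<Rightarrow> 'k::field) \<Rightarrow> 'k) \<Rightarrow> ('i \<Rightarrow> 'k) \<Rightarrow> ('i \<Rightarrow> 'k) \<Rightarrow> 'k" where
  "dderiv f x v = coeff (THE p. \<forall>t. poly p t = f (\<lambda>i. x i + t * v i)) 1"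

definition grad :: "(('i \<Rightarrow> 'k::field) \<Rightarrow> 'k) \<Rightarrow> ('i \<Rightarrow> 'k) \<Rightarrow> ('i \<Rightarrow> 'k)" where
  "grad f x = (\<lambda>i. dderiv f x (\<lambda>j. if j = i then 1 else 0))"

definition lie_poisson :: "(('i::finite \<Rightarrow> 'k::field) \<Rightarrow> ('i \<Rightarrow> 'k) \<Rightarrow> ('i \<Rightarrow> 'k))
     \<Rightarrow> (('i \<Rightarrow> 'k) \<Rightarrow> 'k) \<Rightarrow> (('i \<Rightarrow> 'k) \<Rightarrow> 'k) \<Rightarrow> (('i \<Rightarrow> 'k) \<Rightarrow> 'k)" where
  "lie_poisson br f g = (\<lambda>x. pair x (br (grad f x) (grad g x)))"

definition Ann :: "(('i::finite \<Rightarrow> 'k::field) \<Rightarrow> ('i \<Rightarrow> 'k) \<Rightarrow> ('i \<Rightarrow> 'k)) \<Rightarrow> ('i \<Rightarrow> 'k) set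
     \<Rightarrow> (('i \<Rightarrow> 'k) \<Rightarrow> 'k) set" where
  "Ann br H = {f \<in> Sg. \<forall>\<eta>\<in>H. lie_poisson br f (\<lambda>x. pair x \<eta>) = (\<lambda>_. 0)}"

definition admissible :: "(('i::finite \<Rightarrow> 'k::field) \<Rightarrow> ('i \<Rightarrow> 'k) \<Rightarrow> ('i \<Rightarrow> 'k)) \<Rightarrow> ('i \<Rightarrow> 'k) set
     \<Rightarrow> ((('i \<Rightarrow> 'k) \<Rightarrow> 'k) \<Rightarrow> ('i \<Rightarrow> 'k)) \<Rightarrow> bool" where
  "admissible br H \<Psi> \<longleftrightarrow> poly_map_hdual H \<Psi> \<and> (\<forall>h\<in>hdual H. \<Psi> h \<in> St br H h)"

definition fPsi :: "('i \<Rightarrow> 'k) set \<Rightarrow> ((('i \<Rightarrow> 'k) \<Rightarrow> 'k) \<Rightarrow> ('i \<Rightarrow> 'k)) \<Rightarrow> ('i::finite \<Rightarrow> 'k::field) \<Rightarrow> 'k" where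
  "fPsi H \<Psi> = (\<lambda>x. pair x (\<Psi> (restr H x)))"

definition map_bracket :: "(('i \<Rightarrow> 'k) \<Rightarrow> ('i \<Rightarrow> 'k) \<Rightarrow> ('i \<Rightarrow> 'k))
     \<Rightarrow> ('h \<Rightarrow> ('i \<Rightarrow> 'k)) \<Rightarrow> ('h \<Rightarrow> ('i \<Rightarrow> 'k)) \<Rightarrow> ('h \<Rightarrow> ('i \<Rightarrow> 'k))" where
  "map_bracket br \<Psi>1 \<Psi>2 = (\<lambda>h. br (\<Psi>1 h) (\<Psi>2 h))"

end

theory Submission
  imports Defs
begin

text \<open>The differential of \<open>f\<^sub>\<Psi>\<close> at \<open>x\<close> is \<open>\<Psi>(\<pi> x) + \<zeta>\<close> for some \<open>\<zeta> \<in> H\<close>: differentiating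
  the coefficients \<open>x \<mapsto> \<Psi>(\<pi> x)\<close>, which are polynomials in linear forms from \<open>H\<close>, only
  produces elements of \<open>H\<close>. Since \<open>H\<close> is a commutative ideal and \<open>\<Psi>(\<pi> x)\<close> stabilises \<open>\<pi> x\<close>,
  every bracket involving \<open>\<zeta>\<close> pairs to zero with \<open>x\<close>. Hence
  \<open>{f\<^sub>\<Psi>\<^sub>1, f\<^sub>\<Psi>\<^sub>2}(x) = \<langle>x, [\<Psi>\<^sub>1(\<pi> x), \<Psi>\<^sub>2(\<pi> x)]\<rangle>\<close>, and the same computation with a
  linear form \<open>\<eta> \<in> H\<close> in place of \<open>f\<^sub>\<Psi>\<^sub>2\<close> shows \<open>f\<^sub>\<Psi> \<in> Ann(H)\<close>. By the Jacobi identity each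
  \<open>St(h)\<close> is a subalgebra, so admissible maps are closed under the pointwise bracket.\<close>

lemma pair_add_left: "pair (\<lambda>i. x i + y i) \<xi> = pair x \<xi> + pair y \<xi>"
  and pair_add_right: "pair x (\<lambda>i. \<xi> i + \<eta> i) = pair x \<xi> + pair x \<eta>"
  and pair_scale_left: "pair (\<lambda>i. c * x i) \<xi> = c * pair x \<xi>"
  and pair_scale_right: "pair x (\<lambda>i. c * \<xi> i) = c * pair x \<xi>"
  and pair_uminus_right: "pair x (\<lambda>i. - \<xi> i) = - pair x \<xi>"
  and pair_zero_right: "pair x (\<lambda>_. 0) = 0"
  unfolding pair_def by (auto simp: algebra_simps sum.distrib sum_distrib_left sum_negf)

lemma sum_unit_mult_left:
  fixes f :: "'i::finite \<Rightarrow> 'k::comm_ring_1"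
  shows "(\<Sum>i\<in>UNIV. (if i = k then 1 else 0) * f i) = f k"
    and "(\<Sum>i\<in>UNIV. (if k = i then 1 else 0) * f i) = f k"
  by (simp_all add: if_distrib[of "\<lambda>c. c * _"] cong: if_cong)

lemma pair_unit_left: "pair (\<lambda>i. if i = k then 1 else 0) \<xi> = \<xi> k"
  and pair_unit_right: "pair x (\<lambda>i. if i = k then 1 else 0) = x k"
  unfolding pair_def by (simp_all add: sum_unit_mult_left mult.commute[of "x _"])

lemma subspace_zero: "subspace_of H \<Longrightarrow> (\<lambda>_. 0) \<in> H"
  and subspace_add: "subspace_of H \<Longrightarrow> u \<in> H \<Longrightarrow> v \<in> H \<Longrightarrow> (\<lambda>i. u i + v i) \<in> H"
  and subspace_scale: "subspace_of H \<Longrightarrow> u \<in> H \<Longrightarrow> (\<lambda>i. a * u i) \<in> H"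
  unfolding subspace_of_def by blast+

lemma subspace_sum:
  assumes "subspace_of H" "finite A" "\<And>j. j \<in> A \<Longrightarrow> g j \<in> H"
  shows "(\<lambda>i. \<Sum>j\<in>A. c j * g j i) \<in> H"
  using assms(2,3)
proof (induction A rule: finite_induct)
  case empty
  show ?case using subspace_zero[OF assms(1)] by simp
next
  case (insert a A)
  then show ?case
    using subspace_add[OF assms(1) subspace_scale[OF assms(1)]] by simp
qed

subsection \<open>Derivatives of polynomial functions\<close>

definition line_polynomial :: "(('i \<Rightarrow> 'k::comm_ring_1) \<Rightarrow> 'k) \<Rightarrow> bool" where
  "line_polynomial f \<longleftrightarrow> (\<forall>x v. \<exists>q. \<forall>t. poly q t = f (\<lambda>i. x i + t * v i))"

text \<open>Over an infinite field the polynomial \<open>t \<mapsto> f(x + t v)\<close> is unique, so the \<open>THE\<close> in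
  \<open>dderiv\<close> picks the intended polynomial.\<close>

lemma dderiv_eqI:
  fixes f :: "('i \<Rightarrow> 'k::field_char_0) \<Rightarrow> 'k"
  assumes "\<forall>t. poly q t = f (\<lambda>i. x i + t * v i)"
  shows "dderiv f x v = coeff q 1"
proof -
  have "(THE p. \<forall>t. poly p t = f (\<lambda>i. x i + t * v i)) = q"
  proof (rule the_equality)
    fix p assume "\<forall>t. poly p t = f (\<lambda>i. x i + t * v i)"
    with assms have "poly p = poly q" by auto
    then show "p = q" by (simp add: poly_eq_poly_eq_iff)
  qed (use assms in auto)
  then show ?thesis unfolding dderiv_def by simp
qed

lemma coeff_0_line_polynomial:
  assumes "\<forall>t. poly q t = f (\<lambda>i. x i + t * v i)"
  shows "coeff q 0 = f x"
  using assms[rule_format, of 0] by (simp add: poly_0_coeff_0)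

lemma line_polynomial_const: "line_polynomial (\<lambda>_. c)"
  unfolding line_polynomial_def by (auto intro: exI[of _ "[:c:]"])

lemma line_polynomial_pair: "line_polynomial (\<lambda>y. pair y \<xi>)"
  unfolding line_polynomial_def
  by (auto intro!: exI[of _ "[:pair _ \<xi>, pair _ \<xi>:]"] simp: pair_add_left pair_scale_left algebra_simps)

lemma line_polynomial_add:
  "line_polynomial f \<Longrightarrow> line_polynomial g \<Longrightarrow> line_polynomial (\<lambda>y. f y + g y)"
  unfolding line_polynomial_def by (metis poly_add)

lemma line_polynomial_mult:
  "line_polynomial f \<Longrightarrow> line_polynomial g \<Longrightarrow> line_polynomial (\<lambda>y. f y * g y)"
  unfolding line_polynomial_def by (metis poly_mult)

lemma line_polynomial_sum:
  "finite A \<Longrightarrow> (\<And>j. j \<in> A \<Longrightarrow> line_polynomial (f j)) \<Longrightarrow> line_polynomial (\<lambda>y. \<Sum>j\<in>A. f j y)"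
  by (induction A rule: finite_induct) (auto intro: line_polynomial_const line_polynomial_add)

lemma polyalg_line_polynomial:
  "p \<in> polyalg {(\<lambda>y. pair y \<xi>) | \<xi>. \<xi> \<in> S} \<Longrightarrow> line_polynomial p"
  by (induction rule: polyalg.induct)
    (auto intro: line_polynomial_const line_polynomial_pair line_polynomial_add line_polynomial_mult)

context
  fixes f g :: "('i \<Rightarrow> 'k::field_char_0) \<Rightarrow> 'k"
  assumes f: "line_polynomial f" and g: "line_polynomial g"
begin

lemma dderiv_add: "dderiv (\<lambda>y. f y + g y) x v = dderiv f x v + dderiv g x v"
proof -
  obtain p q where p: "\<forall>t. poly p t = f (\<lambda>i. x i + t * v i)"
    and q: "\<forall>t. poly q t = g (\<lambda>i. x i + t * v i)"
    using f g unfolding line_polynomial_def by meson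
  have "dderiv (\<lambda>y. f y + g y) x v = coeff (p + q) 1"
    using p q by (intro dderiv_eqI) simp
  then show ?thesis by (simp add: dderiv_eqI[OF p] dderiv_eqI[OF q])
qed

lemma dderiv_mult: "dderiv (\<lambda>y. f y * g y) x v = f x * dderiv g x v + dderiv f x v * g x"
proof -
  obtain p q where p: "\<forall>t. poly p t = f (\<lambda>i. x i + t * v i)"
    and q: "\<forall>t. poly q t = g (\<lambda>i. x i + t * v i)"
    using f g unfolding line_polynomial_def by meson
  have "dderiv (\<lambda>y. f y * g y) x v = coeff (p * q) 1"
    using p q by (intro dderiv_eqI) simp
  also have "\<dots> = coeff p 0 * coeff q 1 + coeff p 1 * coeff q 0"
    by (simp add: coeff_mult)
  finally show ?thesis
    by (simp add: dderiv_eqI[OF p] dderiv_eqI[OF q] coeff_0_line_polynomial[OF p] coeff_0_line_polynomial[OF q])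
qed

lemma grad_add: "grad (\<lambda>y. f y + g y) x = (\<lambda>i. grad f x i + grad g x i)"
  unfolding grad_def by (simp add: dderiv_add)

lemma grad_mult: "grad (\<lambda>y. f y * g y) x = (\<lambda>i. f x * grad g x i + grad f x i * g x)"
  unfolding grad_def by (simp add: dderiv_mult)

end

lemma grad_const: "grad (\<lambda>_. c) x = (\<lambda>_. 0 :: 'k::field_char_0)"
  unfolding grad_def by (auto intro!: ext simp: dderiv_eqI[of "[:c:]"])

lemma grad_pair:
  fixes \<xi> :: "'i::finite \<Rightarrow> 'k::field_char_0"
  shows "grad (\<lambda>y. pair y \<xi>) x = \<xi>"
proof
  fix k :: 'i
  let ?e = "\<lambda>j. if j = k then 1 else 0 :: 'k"
  have "grad (\<lambda>y. pair y \<xi>) x k = coeff [:pair x \<xi>, pair ?e \<xi>:] 1"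
    unfolding grad_def
    by (rule dderiv_eqI) (simp add: pair_add_left pair_scale_left algebra_simps)
  then show "grad (\<lambda>y. pair y \<xi>) x k = \<xi> k"
    by (simp add: pair_unit_left)
qed

lemma grad_sum:
  fixes f :: "'a \<Rightarrow> ('i \<Rightarrow> 'k::field_char_0) \<Rightarrow> 'k"
  assumes "finite A" "\<And>j. j \<in> A \<Longrightarrow> line_polynomial (f j)"
  shows "grad (\<lambda>y. \<Sum>j\<in>A. f j y) x = (\<lambda>i. \<Sum>j\<in>A. grad (f j) x i)"
  using assms
proof (induction A rule: finite_induct)
  case empty
  then show ?case by (simp add: grad_const)
next
  case (insert a A)
  then show ?case
    by (simp add: grad_add line_polynomial_sum)
qed

lemma polyalg_grad_mem:
  fixes p :: "('i::finite \<Rightarrow> 'k::field_char_0) \<Rightarrow> 'k"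
  assumes S: "subspace_of S" and "p \<in> polyalg {(\<lambda>y. pair y \<xi>) | \<xi>. \<xi> \<in> S}"
  shows "grad p x \<in> S"
  using assms(2)
proof (induction rule: polyalg.induct)
  case (const c)
  then show ?case by (simp add: grad_const subspace_zero[OF S])
next
  case (gen g)
  then show ?case by (auto simp: grad_pair)
next
  case (add p q)
  then show ?case
    by (simp add: grad_add polyalg_line_polynomial subspace_add[OF S])
next
  case (mult p q)
  have "(\<lambda>i. p x * grad q x i + q x * grad p x i) \<in> S"
    using mult.IH by (intro subspace_add[OF S] subspace_scale[OF S])
  then show ?case
    using mult.hyps by (simp add: grad_mult polyalg_line_polynomial mult.commute)
qed

lemma polyalg_mono: "p \<in> polyalg G \<Longrightarrow> G \<subseteq> G' \<Longrightarrow> p \<in> polyalg G'"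
  by (induction rule: polyalg.induct) (auto intro: polyalg.intros)

lemma polyalg_sum:
  "finite A \<Longrightarrow> (\<And>j. j \<in> A \<Longrightarrow> g j \<in> polyalg G) \<Longrightarrow> (\<lambda>x. \<Sum>j\<in>A. g j x) \<in> polyalg G"
  by (induction A rule: finite_induct) (auto intro: polyalg.intros)

lemma poly_on_const: "poly_on G D (\<lambda>_. c)"
  unfolding poly_on_def by (auto intro: polyalg.const)

lemma poly_on_add: "poly_on G D f \<Longrightarrow> poly_on G D g \<Longrightarrow> poly_on G D (\<lambda>x. f x + g x)"
  unfolding poly_on_def by (fastforce intro: polyalg.add)

lemma poly_on_mult: "poly_on G D f \<Longrightarrow> poly_on G D g \<Longrightarrow> poly_on G D (\<lambda>x. f x * g x)"
  unfolding poly_on_def by (fastforce intro: polyalg.mult)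

lemma poly_on_sum:
  "finite A \<Longrightarrow> (\<And>j. j \<in> A \<Longrightarrow> poly_on G D (g j)) \<Longrightarrow> poly_on G D (\<lambda>x. \<Sum>j\<in>A. g j x)"
  by (induction A rule: finite_induct) (auto intro: poly_on_const poly_on_add)

lemma restr_hdual:
  assumes S: "subspace_of H"
  shows "restr H x \<in> hdual H"
  unfolding hdual_def
proof safe
  fix u v a b assume "u \<in> H" "v \<in> H"
  moreover from this have "(\<lambda>i. a * u i + b * v i) \<in> H"
    by (intro subspace_add[OF S] subspace_scale[OF S])
  ultimately show "restr H x (\<lambda>i. a * u i + b * v i) = a * restr H x u + b * restr H x v"
    unfolding restr_def by (simp add: pair_add_right pair_scale_right)
qed (simp add: restr_def)

lemma polyalg_comp_restr:
  "q \<in> polyalg {(\<lambda>\<phi>. \<phi> \<eta>) | \<eta>. \<eta> \<in> H} \<Longrightarrow>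
     (\<lambda>x. q (restr H x)) \<in> polyalg {(\<lambda>x. pair x \<xi>) | \<xi>. \<xi> \<in> H}"
proof (induction rule: polyalg.induct)
  case (gen g)
  then obtain \<eta> where "g = (\<lambda>\<phi>. \<phi> \<eta>)" "\<eta> \<in> H" by blast
  then have "(\<lambda>x. g (restr H x)) = (\<lambda>x. pair x \<eta>)" by (simp add: restr_def)
  with \<open>\<eta> \<in> H\<close> show ?case by (auto intro: polyalg.gen)
qed (auto intro: polyalg.intros)

lemma poly_map_hdual_comp_restr:
  assumes S: "subspace_of H" and "poly_map_hdual H \<Psi>"
  obtains P where "\<And>j. P j \<in> polyalg {(\<lambda>x. pair x \<xi>) | \<xi>. \<xi> \<in> H}"
    and "\<And>x j. \<Psi> (restr H x) j = P j x"
proof -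
  have "\<forall>j. \<exists>q. q \<in> polyalg {(\<lambda>\<phi>. \<phi> \<eta>) | \<eta>. \<eta> \<in> H} \<and> (\<forall>\<phi>\<in>hdual H. \<Psi> \<phi> j = q \<phi>)"
    using assms(2) unfolding poly_map_hdual_def poly_on_def Bex_def .
  then obtain Q where "\<forall>j. Q j \<in> polyalg {(\<lambda>\<phi>. \<phi> \<eta>) | \<eta>. \<eta> \<in> H} \<and> (\<forall>\<phi>\<in>hdual H. \<Psi> \<phi> j = Q j \<phi>)"
    by (rule choice[THEN exE])
  then have Q: "\<And>j. Q j \<in> polyalg {(\<lambda>\<phi>. \<phi> \<eta>) | \<eta>. \<eta> \<in> H}"
    "\<And>j \<phi>. \<phi> \<in> hdual H \<Longrightarrow> \<Psi> \<phi> j = Q j \<phi>"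
    by blast+
  show ?thesis
  proof (rule that)
    show "(\<lambda>x. Q j (restr H x)) \<in> polyalg {(\<lambda>x. pair x \<xi>) | \<xi>. \<xi> \<in> H}" for j
      by (rule polyalg_comp_restr[OF Q(1)])
    show "\<Psi> (restr H x) j = Q j (restr H x)" for x j
      by (rule Q(2)[OF restr_hdual[OF S]])
  qed
qed

lemma fPsi_eq_sum:
  assumes "\<And>x j. \<Psi> (restr H x) j = P j x"
  shows "fPsi H \<Psi> = (\<lambda>x. \<Sum>j\<in>UNIV. pair x (\<lambda>i. if i = j then 1 else 0) * P j x)"
  unfolding fPsi_def pair_unit_right by (simp add: pair_def assms)

lemma fPsi_Sg:
  assumes S: "subspace_of H" and "poly_map_hdual H \<Psi>"
  shows "fPsi H \<Psi> \<in> Sg"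
proof -
  obtain P where P: "\<And>j. P j \<in> polyalg {(\<lambda>x. pair x \<xi>) | \<xi>. \<xi> \<in> H}"
    and P_eq: "\<And>x j. \<Psi> (restr H x) j = P j x"
    using poly_map_hdual_comp_restr[OF assms] by blast
  let ?G = "{(\<lambda>x. pair x \<xi>) | \<xi>. True}"
  have "(\<lambda>x. pair x (\<lambda>i. if i = j then 1 else 0) * P j x) \<in> polyalg ?G" for j
  proof (rule polyalg.mult)
    show "(\<lambda>x. pair x (\<lambda>i. if i = j then 1 else 0)) \<in> polyalg ?G" by (rule polyalg.gen) blast
    show "P j \<in> polyalg ?G" by (rule polyalg_mono[OF P]) blast
  qed
  then have "(\<lambda>x. \<Sum>j\<in>UNIV. pair x (\<lambda>i. if i = j then 1 else 0) * P j x) \<in> polyalg ?G"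
    by (intro polyalg_sum) auto
  then show ?thesis
    unfolding Sg_def poly_on_def fPsi_eq_sum[where P=P, OF P_eq] by (auto intro!: bexI)
qed

lemma grad_fPsi:
  fixes \<Psi> :: "(('i::finite \<Rightarrow> 'k::field_char_0) \<Rightarrow> 'k) \<Rightarrow> ('i \<Rightarrow> 'k)"
  assumes S: "subspace_of H" and "poly_map_hdual H \<Psi>"
  obtains \<zeta> where "\<zeta> \<in> H" and "grad (fPsi H \<Psi>) x = (\<lambda>i. \<Psi> (restr H x) i + \<zeta> i)"
proof -
  obtain P where P: "\<And>j. P j \<in> polyalg {(\<lambda>x. pair x \<xi>) | \<xi>. \<xi> \<in> H}"
    and P_eq: "\<And>x j. \<Psi> (restr H x) j = P j x"
    using poly_map_hdual_comp_restr[OF assms] by blast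
  let ?\<zeta> = "\<lambda>i. \<Sum>j\<in>UNIV. x j * grad (P j) x i"
  have "grad (fPsi H \<Psi>) x =
      (\<lambda>i. \<Sum>j\<in>UNIV. grad (\<lambda>y. pair y (\<lambda>l. if l = j then 1 else 0) * P j y) x i)"
    unfolding fPsi_eq_sum[where P=P, OF P_eq]
    by (intro grad_sum line_polynomial_mult line_polynomial_pair polyalg_line_polynomial[OF P]) simp
  also have "\<dots> = (\<lambda>i. \<Sum>j\<in>UNIV. x j * grad (P j) x i + (if i = j then 1 else 0) * P j x)"
    unfolding grad_mult[OF line_polynomial_pair polyalg_line_polynomial[OF P]] grad_pair
    unfolding pair_unit_right ..
  also have "\<dots> = (\<lambda>i. \<Psi> (restr H x) i + ?\<zeta> i)"
    by (simp add: sum.distrib P_eq sum_unit_mult_left add.commute)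
  finally have "grad (fPsi H \<Psi>) x = (\<lambda>i. \<Psi> (restr H x) i + ?\<zeta> i)" .
  moreover have "?\<zeta> \<in> H"
    by (rule subspace_sum[OF S finite_UNIV polyalg_grad_mem[OF S P]])
  ultimately show ?thesis by (intro that)
qed

context
  fixes br :: "('i::finite \<Rightarrow> 'k::field) \<Rightarrow> ('i \<Rightarrow> 'k) \<Rightarrow> ('i \<Rightarrow> 'k)"
  assumes la: "lie_algebra br"
begin

lemma br_add_left: "br (\<lambda>i. x i + y i) z = (\<lambda>i. br x z i + br y z i)"
  and br_add_right: "br z (\<lambda>i. x i + y i) = (\<lambda>i. br z x i + br z y i)"
  and br_scale_left: "br (\<lambda>i. a * x i) z = (\<lambda>i. a * br x z i)"
  and br_scale_right: "br z (\<lambda>i. a * x i) = (\<lambda>i. a * br z x i)"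
  and br_self: "br x x = (\<lambda>_. 0)"
  and br_jacobi: "(\<lambda>i. br x (br y z) i + br y (br z x) i + br z (br x y) i) = (\<lambda>_. 0)"
proof -
  have L: "\<And>a b x y z. br (\<lambda>i. a * x i + b * y i) z = (\<lambda>i. a * br x z i + b * br y z i)"
    and R: "\<And>a b x y z. br z (\<lambda>i. a * x i + b * y i) = (\<lambda>i. a * br z x i + b * br z y i)"
    and "\<And>x. br x x = (\<lambda>_. 0)"
    and "\<And>x y z. (\<lambda>i. br x (br y z) i + br y (br z x) i + br z (br x y) i) = (\<lambda>_. 0)"
    using la unfolding lie_algebra_def by blast+
  then show "br x x = (\<lambda>_. 0)"
    and "(\<lambda>i. br x (br y z) i + br y (br z x) i + br z (br x y) i) = (\<lambda>_. 0)"
    by blast+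
  show "br (\<lambda>i. x i + y i) z = (\<lambda>i. br x z i + br y z i)"
    using L[where a=1 and b=1 and x=x and y=y and z=z] by simp
  show "br z (\<lambda>i. x i + y i) = (\<lambda>i. br z x i + br z y i)"
    using R[where a=1 and b=1 and x=x and y=y and z=z] by simp
  show "br (\<lambda>i. a * x i) z = (\<lambda>i. a * br x z i)"
    using L[where a=a and b=0 and x=x and y=x and z=z] by simp
  show "br z (\<lambda>i. a * x i) = (\<lambda>i. a * br z x i)"
    using R[where a=a and b=0 and x=x and y=x and z=z] by simp
qed

lemma br_anticomm: "br y x = (\<lambda>i. - br x y i)"
proof -
  have "(\<lambda>i. br x x i + br x y i + (br y x i + br y y i)) = (\<lambda>_. 0)"
    using br_self[of "\<lambda>i. x i + y i"] by (simp add: br_add_left br_add_right)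
  then have "(\<lambda>i. br x y i + br y x i) = (\<lambda>_. 0)" by (simp add: br_self)
  then show ?thesis by (auto simp: fun_eq_iff add_eq_0_iff)
qed

lemma br_sum_left:
  "finite A \<Longrightarrow> br (\<lambda>i. \<Sum>j\<in>A. c j * e j i) z = (\<lambda>i. \<Sum>j\<in>A. c j * br (e j) z i)"
proof (induction A rule: finite_induct)
  case empty
  show ?case using br_scale_left[of 0 z z] by simp
next
  case (insert a A)
  then show ?case by (simp add: br_add_left br_scale_left)
qed

lemma br_sum_right:
  "finite A \<Longrightarrow> br z (\<lambda>i. \<Sum>j\<in>A. c j * e j i) = (\<lambda>i. \<Sum>j\<in>A. c j * br z (e j) i)"
proof (induction A rule: finite_induct)
  case empty
  show ?case using br_scale_right[of z 0 z] by simp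
next
  case (insert a A)
  then show ?case by (simp add: br_add_right br_scale_right)
qed

lemma br_structure_constants:
  "br u w i = (\<Sum>j\<in>UNIV. \<Sum>k\<in>UNIV.
     u j * (w k * br (\<lambda>l. if l = j then 1 else 0) (\<lambda>l. if l = k then 1 else 0) i))"
proof -
  let ?e = "\<lambda>j l. if l = j then 1 else 0 :: 'k"
  have expand: "v = (\<lambda>l. \<Sum>j\<in>UNIV. v j * ?e j l)" for v :: "'i \<Rightarrow> 'k"
    by (simp add: if_distrib cong: if_cong)
  have "br u w = br (\<lambda>l. \<Sum>j\<in>UNIV. u j * ?e j l) (\<lambda>l. \<Sum>k\<in>UNIV. w k * ?e k l)"
    by (subst (1 2) expand) (rule refl)
  then show ?thesis
    by (simp add: br_sum_left br_sum_right sum_distrib_left)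
qed

end

subsection \<open>Stabilisers\<close>

context
  fixes br :: "('i::finite \<Rightarrow> 'k::field) \<Rightarrow> ('i \<Rightarrow> 'k) \<Rightarrow> ('i \<Rightarrow> 'k)" and H h
  assumes la: "lie_algebra br" and ci: "comm_ideal br H" and h: "h \<in> hdual H"
begin

lemma ideal_br_mem: "\<eta> \<in> H \<Longrightarrow> br \<xi> \<eta> \<in> H"
  using ci unfolding comm_ideal_def by blast

lemma hdual_lin: "u \<in> H \<Longrightarrow> v \<in> H \<Longrightarrow> h (\<lambda>i. a * u i + b * v i) = a * h u + b * h v"
  using h unfolding hdual_def by blast

lemma subspace_St: "subspace_of (St br H h)"
  unfolding subspace_of_def St_def
proof safe
  fix \<eta> assume "\<eta> \<in> H"
  show "h (br (\<lambda>_. 0) \<eta>) = 0"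
    using br_scale_left[OF la, of 0 \<eta> \<eta>] hdual_lin[of \<eta> \<eta> 0 0] \<open>\<eta> \<in> H\<close> by simp
next
  fix \<xi>1 \<xi>2 \<eta> assume "\<forall>\<eta>\<in>H. h (br \<xi>1 \<eta>) = 0" "\<forall>\<eta>\<in>H. h (br \<xi>2 \<eta>) = 0" "\<eta> \<in> H"
  then show "h (br (\<lambda>i. \<xi>1 i + \<xi>2 i) \<eta>) = 0"
    using hdual_lin[of "br \<xi>1 \<eta>" "br \<xi>2 \<eta>" 1 1]
    by (simp add: br_add_left[OF la] ideal_br_mem)
next
  fix a \<xi> \<eta> assume "\<forall>\<eta>\<in>H. h (br \<xi> \<eta>) = 0" "\<eta> \<in> H"
  then show "h (br (\<lambda>i. a * \<xi> i) \<eta>) = 0"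
    using hdual_lin[of "br \<xi> \<eta>" "br \<xi> \<eta>" a 0]
    by (simp add: br_scale_left[OF la] ideal_br_mem)
qed

text \<open>By Jacobi, \<open>[[\<xi>\<^sub>1,\<xi>\<^sub>2],\<eta>] = [\<xi>\<^sub>1,[\<xi>\<^sub>2,\<eta>]] - [\<xi>\<^sub>2,[\<xi>\<^sub>1,\<eta>]]\<close>, and both inner brackets lie in the
  ideal \<open>H\<close>.\<close>

lemma St_br_closed:
  assumes s1: "\<xi>1 \<in> St br H h" and s2: "\<xi>2 \<in> St br H h"
  shows "br \<xi>1 \<xi>2 \<in> St br H h"
  unfolding St_def
proof safe
  fix \<eta> assume \<eta>: "\<eta> \<in> H"
  have "br (br \<xi>1 \<xi>2) \<eta> = (\<lambda>i. 1 * br \<xi>1 (br \<xi>2 \<eta>) i + (-1) * br \<xi>2 (br \<xi>1 \<eta>) i)"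
  proof
    fix i
    have "br \<xi>1 (br \<xi>2 \<eta>) i + br \<xi>2 (br \<eta> \<xi>1) i + br \<eta> (br \<xi>1 \<xi>2) i = 0"
      using fun_cong[OF br_jacobi[OF la, of \<xi>1 \<xi>2 \<eta>], of i] by simp
    then show "br (br \<xi>1 \<xi>2) \<eta> i = 1 * br \<xi>1 (br \<xi>2 \<eta>) i + (-1) * br \<xi>2 (br \<xi>1 \<eta>) i"
      using br_anticomm[OF la, of \<eta> \<xi>1] br_anticomm[OF la, of \<eta> "br \<xi>1 \<xi>2"]
      by (simp add: br_scale_right[OF la, of _ "-1", simplified] algebra_simps)
  qed
  moreover have "br \<xi>1 (br \<xi>2 \<eta>) \<in> H" "br \<xi>2 (br \<xi>1 \<eta>) \<in> H"
    using \<eta> by (simp_all add: ideal_br_mem)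
  moreover have "h (br \<xi>1 (br \<xi>2 \<eta>)) = 0" "h (br \<xi>2 (br \<xi>1 \<eta>)) = 0"
    using s1 s2 \<eta> ideal_br_mem unfolding St_def by blast+
  ultimately show "h (br (br \<xi>1 \<xi>2) \<eta>) = 0"
    by (simp only: hdual_lin) simp
qed

end

lemma admissible_poly_on:
  "admissible br H \<Psi> \<Longrightarrow> poly_on {(\<lambda>\<phi>. \<phi> \<eta>) | \<eta>. \<eta> \<in> H} (hdual H) (\<lambda>\<phi>. \<Psi> \<phi> i)"
  and admissible_St: "admissible br H \<Psi> \<Longrightarrow> h \<in> hdual H \<Longrightarrow> \<Psi> h \<in> St br H h"
  unfolding admissible_def poly_map_hdual_def by blast+

context
  fixes br :: "('i::finite \<Rightarrow> 'k::field) \<Rightarrow> ('i \<Rightarrow> 'k) \<Rightarrow> ('i \<Rightarrow> 'k)" and H \<Psi>1 \<Psi>2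
  assumes la: "lie_algebra br" and ci: "comm_ideal br H"
    and adm1: "admissible br H \<Psi>1" and adm2: "admissible br H \<Psi>2"
begin

lemma admissible_add: "admissible br H (\<lambda>h i. \<Psi>1 h i + \<Psi>2 h i)"
  unfolding admissible_def poly_map_hdual_def
proof (intro conjI allI ballI)
  show "poly_on {(\<lambda>\<phi>. \<phi> \<eta>) | \<eta>. \<eta> \<in> H} (hdual H) (\<lambda>\<phi>. \<Psi>1 \<phi> i + \<Psi>2 \<phi> i)" for i
    by (intro poly_on_add admissible_poly_on[OF adm1] admissible_poly_on[OF adm2])
  show "(\<lambda>i. \<Psi>1 h i + \<Psi>2 h i) \<in> St br H h" if "h \<in> hdual H" for h
    using that
    by (intro subspace_add[OF subspace_St[OF la ci]] admissible_St[OF adm1] admissible_St[OF adm2])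
qed

lemma admissible_map_bracket: "admissible br H (map_bracket br \<Psi>1 \<Psi>2)"
  unfolding admissible_def poly_map_hdual_def
proof (intro conjI allI ballI)
  fix i
  let ?c = "\<lambda>j k. br (\<lambda>l. if l = j then 1 else 0) (\<lambda>l. if l = k then 1 else 0) i"
  have "(\<lambda>\<phi>. map_bracket br \<Psi>1 \<Psi>2 \<phi> i) =
      (\<lambda>\<phi>. \<Sum>j\<in>UNIV. \<Sum>k\<in>UNIV. \<Psi>1 \<phi> j * (\<Psi>2 \<phi> k * ?c j k))"
    unfolding map_bracket_def by (rule ext) (rule br_structure_constants[OF la])
  moreover have "poly_on {(\<lambda>\<phi>. \<phi> \<eta>) | \<eta>. \<eta> \<in> H} (hdual H)
      (\<lambda>\<phi>. \<Sum>j\<in>UNIV. \<Sum>k\<in>UNIV. \<Psi>1 \<phi> j * (\<Psi>2 \<phi> k * ?c j k))"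
    by (intro poly_on_sum poly_on_mult poly_on_const finite_UNIV
        admissible_poly_on[OF adm1] admissible_poly_on[OF adm2])
  ultimately show "poly_on {(\<lambda>\<phi>. \<phi> \<eta>) | \<eta>. \<eta> \<in> H} (hdual H) (\<lambda>\<phi>. map_bracket br \<Psi>1 \<Psi>2 \<phi> i)"
    by simp
next
  fix h assume "h \<in> hdual H"
  then show "map_bracket br \<Psi>1 \<Psi>2 h \<in> St br H h"
    unfolding map_bracket_def
    by (intro St_br_closed[OF la ci] admissible_St[OF adm1] admissible_St[OF adm2])
qed

end

lemma admissible_scale:
  assumes la: "lie_algebra br" and ci: "comm_ideal br H" and adm: "admissible br H \<Psi>"
  shows "admissible br H (\<lambda>h i. a * \<Psi> h i)"
  unfolding admissible_def poly_map_hdual_def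
proof (intro conjI allI ballI)
  show "poly_on {(\<lambda>\<phi>. \<phi> \<eta>) | \<eta>. \<eta> \<in> H} (hdual H) (\<lambda>\<phi>. a * \<Psi> \<phi> i)" for i
    by (intro poly_on_mult poly_on_const admissible_poly_on[OF adm])
  show "(\<lambda>i. a * \<Psi> h i) \<in> St br H h" if "h \<in> hdual H" for h
    using that by (intro subspace_scale[OF subspace_St[OF la ci]] admissible_St[OF adm])
qed

subsection \<open>The Lie--Poisson bracket\<close>

text \<open>\<open>\<langle>x, [\<psi>, \<zeta>]\<rangle> = (\<pi> x)([\<psi>, \<zeta>])\<close> because \<open>[\<psi>, \<zeta>] \<in> H\<close>.\<close>

lemma pair_br_St_ideal:
  assumes ci: "comm_ideal br H" and "\<psi> \<in> St br H (restr H x)" "\<zeta> \<in> H"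
  shows "pair x (br \<psi> \<zeta>) = 0"
proof -
  have "br \<psi> \<zeta> \<in> H" using ci \<open>\<zeta> \<in> H\<close> unfolding comm_ideal_def by blast
  moreover have "restr H x (br \<psi> \<zeta>) = 0" using assms(2,3) unfolding St_def by blast
  ultimately show ?thesis unfolding restr_def by simp
qed

lemma pair_br_add_ideal:
  assumes la: "lie_algebra br" and ci: "comm_ideal br H"
    and \<psi>: "\<psi>1 \<in> St br H (restr H x)" "\<psi>2 \<in> St br H (restr H x)"
    and \<zeta>: "\<zeta>1 \<in> H" "\<zeta>2 \<in> H"
  shows "pair x (br (\<lambda>i. \<psi>1 i + \<zeta>1 i) (\<lambda>i. \<psi>2 i + \<zeta>2 i)) = pair x (br \<psi>1 \<psi>2)"
proof -
  have "pair x (br \<zeta>1 \<psi>2) = 0"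
    using pair_br_St_ideal[OF ci \<psi>(2) \<zeta>(1)]
    by (simp add: br_anticomm[OF la, of \<zeta>1 \<psi>2] pair_uminus_right)
  moreover have "br \<zeta>1 \<zeta>2 = (\<lambda>_. 0)" using ci \<zeta> unfolding comm_ideal_def by blast
  ultimately show ?thesis
    by (simp add: br_add_left[OF la] br_add_right[OF la] pair_add_right pair_zero_right
        pair_br_St_ideal[OF ci \<psi>(1) \<zeta>(2)])
qed

lemma lie_poisson_fPsi:
  fixes br :: "('i::finite \<Rightarrow> 'k::field_char_0) \<Rightarrow> ('i \<Rightarrow> 'k) \<Rightarrow> ('i \<Rightarrow> 'k)"
  assumes la: "lie_algebra br" and ci: "comm_ideal br H"
    and adm1: "admissible br H \<Psi>1" and adm2: "admissible br H \<Psi>2"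
  shows "lie_poisson br (fPsi H \<Psi>1) (fPsi H \<Psi>2) = fPsi H (map_bracket br \<Psi>1 \<Psi>2)"
proof
  fix x
  have S: "subspace_of H" using ci unfolding comm_ideal_def by blast
  have pm: "poly_map_hdual H \<Psi>1" "poly_map_hdual H \<Psi>2"
    using adm1 adm2 unfolding admissible_def by blast+
  obtain \<zeta>1 where \<zeta>1: "\<zeta>1 \<in> H" "grad (fPsi H \<Psi>1) x = (\<lambda>i. \<Psi>1 (restr H x) i + \<zeta>1 i)"
    by (rule grad_fPsi[OF S pm(1)])
  obtain \<zeta>2 where \<zeta>2: "\<zeta>2 \<in> H" "grad (fPsi H \<Psi>2) x = (\<lambda>i. \<Psi>2 (restr H x) i + \<zeta>2 i)"
    by (rule grad_fPsi[OF S pm(2)])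
  show "lie_poisson br (fPsi H \<Psi>1) (fPsi H \<Psi>2) x = fPsi H (map_bracket br \<Psi>1 \<Psi>2) x"
    unfolding lie_poisson_def \<zeta>1(2) \<zeta>2(2) unfolding fPsi_def map_bracket_def
    by (rule pair_br_add_ideal[OF la ci admissible_St[OF adm1 restr_hdual[OF S]]
          admissible_St[OF adm2 restr_hdual[OF S]] \<zeta>1(1) \<zeta>2(1)])
qed

lemma fPsi_Ann:
  fixes br :: "('i::finite \<Rightarrow> 'k::field_char_0) \<Rightarrow> ('i \<Rightarrow> 'k) \<Rightarrow> ('i \<Rightarrow> 'k)"
  assumes la: "lie_algebra br" and ci: "comm_ideal br H" and adm: "admissible br H \<Psi>"
  shows "fPsi H \<Psi> \<in> Ann br H"
proof -
  have S: "subspace_of H" using ci unfolding comm_ideal_def by blast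
  have pm: "poly_map_hdual H \<Psi>" using adm unfolding admissible_def by blast
  have "lie_poisson br (fPsi H \<Psi>) (\<lambda>x. pair x \<eta>) = (\<lambda>_. 0)" if \<eta>: "\<eta> \<in> H" for \<eta>
  proof
    fix x
    obtain \<zeta> where "\<zeta> \<in> H" and grad: "grad (fPsi H \<Psi>) x = (\<lambda>i. \<Psi> (restr H x) i + \<zeta> i)"
      by (rule grad_fPsi[OF S pm])
    have "br \<zeta> \<eta> = (\<lambda>_. 0)" using ci \<eta> \<open>\<zeta> \<in> H\<close> unfolding comm_ideal_def by blast
    then have "pair x (br (\<lambda>i. \<Psi> (restr H x) i + \<zeta> i) \<eta>) = pair x (br (\<Psi> (restr H x)) \<eta>)"
      by (simp only: br_add_left[OF la] pair_add_right pair_zero_right add_0_right)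
    also have "\<dots> = 0"
      by (rule pair_br_St_ideal[OF ci admissible_St[OF adm restr_hdual[OF S]] \<eta>])
    finally show "lie_poisson br (fPsi H \<Psi>) (\<lambda>x. pair x \<eta>) x = 0"
      unfolding lie_poisson_def grad_pair grad .
  qed
  moreover have "fPsi H \<Psi> \<in> Sg" using fPsi_Sg[OF S pm] .
  ultimately show ?thesis unfolding Ann_def by blast
qed

theorem lemma3:
  fixes br :: "('i::finite \<Rightarrow> 'k::field_char_0) \<Rightarrow> ('i \<Rightarrow> 'k) \<Rightarrow> ('i \<Rightarrow> 'k)"
    and H :: "('i \<Rightarrow> 'k) set"
  assumes "lie_algebra br"
    and "comm_ideal br H"
  shows "(\<forall>\<Psi>. admissible br H \<Psi> \<longrightarrow> fPsi H \<Psi> \<in> Ann br H)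
       \<and> (\<forall>\<Psi>1 \<Psi>2. admissible br H \<Psi>1 \<longrightarrow> admissible br H \<Psi>2 \<longrightarrow>
             admissible br H (\<lambda>h. \<lambda>i. \<Psi>1 h i + \<Psi>2 h i)
           \<and> (\<forall>a. admissible br H (\<lambda>h. \<lambda>i. a * \<Psi>1 h i))
           \<and> admissible br H (map_bracket br \<Psi>1 \<Psi>2)
           \<and> lie_poisson br (fPsi H \<Psi>1) (fPsi H \<Psi>2) = fPsi H (map_bracket br \<Psi>1 \<Psi>2))"
proof (intro conjI allI impI)
  show "fPsi H \<Psi> \<in> Ann br H" if "admissible br H \<Psi>" for \<Psi>
    using fPsi_Ann[OF assms that] .
  fix \<Psi>1 \<Psi>2 assume adm: "admissible br H \<Psi>1" "admissible br H \<Psi>2"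
  show "admissible br H (\<lambda>h i. \<Psi>1 h i + \<Psi>2 h i)"
    using admissible_add[OF assms adm] .
  show "admissible br H (\<lambda>h i. a * \<Psi>1 h i)" for a
    using admissible_scale[OF assms adm(1)] .
  show "admissible br H (map_bracket br \<Psi>1 \<Psi>2)"
    using admissible_map_bracket[OF assms adm] .
  show "lie_poisson br (fPsi H \<Psi>1) (fPsi H \<Psi>2) = fPsi H (map_bracket br \<Psi>1 \<Psi>2)"
    using lie_poisson_fPsi[OF assms adm] .
qed

end
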